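(* For every ordinal $\beta\leq\omega_1$, in $\mathbb{S}(\beta)$ we have $\sigma(\llbracket\mathcal{L}\rrbracket)\subseteq\Lambda$, where $\Lambda=\{A\subseteq I\times\beta: A_0\in\mathcal{B}(I)\text{ and }A_\alpha\in\{\emptyset,I\}\text{ for all }0<\alpha<\beta\}$.
   Context: An LMP is $(S,\Sigma,\{\tau_a\}_{a\in L})$ with $L$ countable and Markov kernels $\tau_a$. The logic $\mathcal{L}$ has formulas $\phi::=\top\mid\phi\wedge\psi\mid\langle a\rangle_{>q}\phi$ ($a\in L$, $q\in\mathbb{Q}\cap[0,1]$) with $\llbracket\top\rrbracket=S$, $\llbracket\phi\wedge\psi\rrbracket=\llbracket\phi\rrbracket\cap\llbracket\psi\rrbracket$, $\llbracket\langle a\rangle_{>q}\phi\rrbracket=\{s:\tau_a(s,\llbracket\phi\rrbracket)>q\}$; $\sigma(\llbracket\mathcal{L}\rrbracket)$ is the $\sigma$-algebra generated by all $\llbracket\phi\rrbracket$. The processes $\mathbb{S}(\beta)$: $I=(0,1)$, $\mathfrak{m}$ Lebesgue measure, $V\subseteq I$ Lebesgue nonmeasurable, $\mathcal{B}_V=\sigma(\mathcal{B}(I)\cup\{V\})$, and $\mathfrak{m}_0,\mathfrak{m}_1$ measures on $\mathcal{B}_V$ extending $\mathfrak{m}$ with $\mathfrak{m}_0(V)\neq\mathfrak{m}_1(V)$. Let $\{q_n\}_{n\in\omega}$ enumerate $\mathbb{Q}\cap I$. For ordinals $\eta$: $\alpha_n(0)=0$, $\alpha_n(\zeta+1)=\zeta$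 for all $n$, and for limit $\lambda$, $(\alpha_n(\lambda))_{n\in\omega}$ is a fixed strictly increasing sequence of nonzero ordinals below $\lambda$ cofinal in $\lambda$. For an ordinal $\beta\leq\omega_1$, $\mathbb{S}(\beta)=(I\times\beta,\ \mathcal{B}_V\otimes\mathcal{P}(\beta),\ \{\tau_n\}_{n\in\omega})$ with $\tau_n((x,\eta),A)=x\cdot\mathfrak{m}_0(A_0)$ if $\eta=0$; $=\mathfrak{m}_0(A_{\alpha_n(\eta)})$ if $\eta>0$ and $x<q_n$; $=\mathfrak{m}_1(A_{\alpha_n(\eta)})$ if $\eta>0$ and $x\geq q_n$; here $A_\gamma=\{r:(r,\gamma)\in A\}$. These $\tau_n$ are Markov kernels, so $\mathbb{S}(\beta)$ is an LMP. *)

theory Defs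
  imports "HOL-Analysis.Analysis"
begin

text \<open>An ordinal beta is represented by a downward-closed subset B of a type of class
wellorder; its elements (with the induced order) are the ordinals below beta.
beta \<le> omega_1 iff every element of B has countably many predecessors.\<close>

definition ord0 :: "'b::wellorder" where
  "ord0 = (LEAST x. True)"

definition is_succ_of :: "'b::wellorder \<Rightarrow> 'b \<Rightarrow> bool" where
  "is_succ_of eta zeta \<longleftrightarrow> zeta < eta \<and> \<not> (\<exists>y. zeta < y \<and> y < eta)"

definition is_limit :: "'b::wellorder \<Rightarrow> bool" where
  "is_limit eta \<longleftrightarrow> eta \<noteq> ord0 \<and> \<not> (\<exists>zeta. is_succ_of eta zeta)"

definition ordinal_le_omega1 :: "'b::wellorder set \<Rightarrow> bool" where
  "ordinal_le_omega1 B \<longleftrightarrow>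
     (\<forall>x\<in>B. \<forall>y. y < x \<longrightarrow> y \<in> B) \<and> (\<forall>x\<in>B. countable {y. y < x})"

definition alpha_seq :: "'b::wellorder set \<Rightarrow> (nat \<Rightarrow> 'b \<Rightarrow> 'b) \<Rightarrow> bool" where
  "alpha_seq B alpha \<longleftrightarrow>
     (\<forall>n. alpha n ord0 = ord0) \<and>
     (\<forall>eta\<in>B. \<forall>zeta. is_succ_of eta zeta \<longrightarrow> (\<forall>n. alpha n eta = zeta)) \<and>
     (\<forall>lam\<in>B. is_limit lam \<longrightarrow>
        strict_mono (\<lambda>n. alpha n lam) \<and>
        (\<forall>n. alpha n lam \<noteq> ord0 \<and> alpha n lam < lam) \<and>
        (\<forall>g. g < lam \<longrightarrow> (\<exists>n. g < alpha n lam)))"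

definition unit_ival :: "real set" where
  "unit_ival = {0<..<1}"

definition borel_I :: "real set set" where
  "borel_I = sets (restrict_space borel unit_ival)"

definition slice :: "(real \<times> 'b) set \<Rightarrow> 'b \<Rightarrow> real set" where
  "slice A g = {r. (r, g) \<in> A}"

definition tauS :: "real measure \<Rightarrow> real measure \<Rightarrow> (nat \<Rightarrow> real) \<Rightarrow> (nat \<Rightarrow> 'b \<Rightarrow> 'b)
    \<Rightarrow> nat \<Rightarrow> real \<times> 'b::wellorder \<Rightarrow> (real \<times> 'b) set \<Rightarrow> real" where
  "tauS m0 m1 qe alpha n s A =
     (case s of (x, eta) \<Rightarrow>
        if eta = ord0 then x * measure m0 (slice A ord0)
        else if x < qe n then measure m0 (slice A (alpha n eta))
        else measure m1 (slice A (alpha n eta)))"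

datatype form = Top | Conj form form | Diam nat rat form

fun wf_form :: "form \<Rightarrow> bool" where
  "wf_form Top = True"
| "wf_form (Conj p q) = (wf_form p \<and> wf_form q)"
| "wf_form (Diam a r p) = (0 \<le> r \<and> r \<le> 1 \<and> wf_form p)"

fun sem :: "'s set \<Rightarrow> (nat \<Rightarrow> 's \<Rightarrow> 's set \<Rightarrow> real) \<Rightarrow> form \<Rightarrow> 's set" where
  "sem S tau Top = S"
| "sem S tau (Conj p q) = sem S tau p \<inter> sem S tau q"
| "sem S tau (Diam a r p) = {s \<in> S. tau a s (sem S tau p) > real_of_rat r}"

definition sigma_L :: "'s set \<Rightarrow> (nat \<Rightarrow> 's \<Rightarrow> 's set \<Rightarrow> real) \<Rightarrow> 's set set" where
  "sigma_L S tau = sigma_sets S {sem S tau p | p. wf_form p}"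

definition Lambda_set :: "'b::wellorder set \<Rightarrow> (real \<times> 'b) set set" where
  "Lambda_set B = {A. A \<subseteq> unit_ival \<times> B \<and> slice A ord0 \<in> borel_I \<and>
      (\<forall>a\<in>B. a \<noteq> ord0 \<longrightarrow> slice A a \<in> {{}, unit_ival})}"

end

theory Submission
  imports Defs
begin

text \<open>\<open>\<Lambda>\<close> is a \<open>\<sigma>\<close>-algebra, since it is cut out by a \<open>\<sigma>\<close>-algebra condition on each slice. For
  \<open>A \<in> \<Lambda>\<close> the kernel \<open>\<tau>\<^sub>n((x,\<eta>),A)\<close> is \<open>x \<cdot> c\<close> on layer \<open>0\<close>, and on higher layers it does not
  depend on \<open>x\<close>: the measures \<open>m\<^sub>0, m\<^sub>1\<close> between which it switches at \<open>q\<^sub>n\<close> agree on the Borel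
  slice being measured. So every modal step maps \<open>\<Lambda>\<close> into itself and all formulas denote sets
  in \<open>\<Lambda>\<close>.\<close>

definition slice_algebra :: "real set \<Rightarrow> 'b set \<Rightarrow> ('b \<Rightarrow> real set set) \<Rightarrow> (real \<times> 'b) set set"
  where "slice_algebra \<Omega> B M = {A. A \<subseteq> \<Omega> \<times> B \<and> (\<forall>g\<in>B. slice A g \<in> M g)}"

lemma sigma_algebra_slice_algebra:
  assumes "\<And>g. g \<in> B \<Longrightarrow> sigma_algebra \<Omega> (M g)"
  shows "sigma_algebra (\<Omega> \<times> B) (slice_algebra \<Omega> B M)"
  unfolding sigma_algebra_iff2
proof (intro conjI allI ballI impI)
  show "slice_algebra \<Omega> B M \<subseteq> Pow (\<Omega> \<times> B)"
    by (auto simp: slice_algebra_def)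
  show "{} \<in> slice_algebra \<Omega> B M"
    using assms by (auto simp: slice_algebra_def slice_def sigma_algebra_iff2)
next
  fix A assume "A \<in> slice_algebra \<Omega> B M"
  moreover have "slice (\<Omega> \<times> B - A) g = \<Omega> - slice A g" if "g \<in> B" for g
    using that by (auto simp: slice_def)
  ultimately show "\<Omega> \<times> B - A \<in> slice_algebra \<Omega> B M"
    using assms by (auto simp: slice_algebra_def sigma_algebra_iff2)
next
  fix A :: "nat \<Rightarrow> (real \<times> 'a) set" assume "range A \<subseteq> slice_algebra \<Omega> B M"
  moreover have "slice (\<Union>i. A i) g = (\<Union>i. slice (A i) g)" for g
    by (auto simp: slice_def)
  ultimately show "(\<Union>i. A i) \<in> slice_algebra \<Omega> B M"
    using assms by (fastforce simp: slice_algebra_def sigma_algebra_iff2 image_subset_iff)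
qed

lemma sigma_algebra_borel_I: "sigma_algebra unit_ival borel_I"
  using sets.sigma_algebra_axioms[of "restrict_space borel unit_ival"]
  by (simp add: borel_I_def space_restrict_space)

lemma empty_in_borel_I: "{} \<in> borel_I"
  by (simp add: borel_I_def)

lemma unit_ival_in_borel_I: "unit_ival \<in> borel_I"
  using sets.top[of "restrict_space borel unit_ival"]
  by (simp add: borel_I_def space_restrict_space)

lemma Lambda_set_eq_slice_algebra:
  "Lambda_set B = slice_algebra unit_ival B (\<lambda>g. if g = ord0 then borel_I else {{}, unit_ival})"
proof -
  have "slice A ord0 \<in> borel_I" if "A \<subseteq> unit_ival \<times> B" "ord0 \<notin> B" for A :: "(real \<times> 'a) set"
  proof -
    from that have "slice A ord0 = {}"
      by (auto simp: slice_def)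
    then show ?thesis
      using empty_in_borel_I by simp
  qed
  then show ?thesis
    by (auto simp: Lambda_set_def slice_algebra_def)
qed

lemma sigma_algebra_Lambda_set: "sigma_algebra (unit_ival \<times> B) (Lambda_set B)"
  unfolding Lambda_set_eq_slice_algebra
  by (rule sigma_algebra_slice_algebra) (simp add: sigma_algebra_borel_I sigma_algebra_trivial)

lemma Lambda_set_slice_in_borel_I:
  assumes "A \<in> Lambda_set B"
  shows "slice A g \<in> borel_I"
proof -
  have "slice A g \<in> insert {} (insert unit_ival borel_I)"
  proof (cases "g \<in> B")
    case False
    with assms have "slice A g = {}"
      by (auto simp: Lambda_set_def slice_def)
    then show ?thesis by simp
  qed (use assms in \<open>auto simp: Lambda_set_def\<close>)
  then show ?thesis
    using empty_in_borel_I unit_ival_in_borel_I by auto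
qed

lemma tauS_above_ord0:
  assumes "A \<in> Lambda_set B" and "eta \<noteq> ord0"
    and "\<And>X. X \<in> borel_I \<Longrightarrow> measure m0 X = measure m1 X"
  shows "tauS m0 m1 qe alpha n (x, eta) A = measure m0 (slice A (alpha n eta))"
  using assms(2) assms(3)[OF Lambda_set_slice_in_borel_I[OF assms(1)]] by (simp add: tauS_def)

lemma Diam_preserves_Lambda_set:
  assumes "A \<in> Lambda_set B"
    and "\<And>X. X \<in> borel_I \<Longrightarrow> measure m0 X = measure m1 X"
  shows "{s \<in> unit_ival \<times> B. tauS m0 m1 qe alpha n s A > r} \<in> Lambda_set B"
    (is "?D \<in> _")
proof -
  define c where "c = measure m0 (slice A ord0)"
  have "{x. r < x * c} \<in> sets borel"
    by measurable
  then have "unit_ival \<inter> {x. r < x * c} \<in> borel_I"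
    by (auto simp: borel_I_def sets_restrict_space)
  moreover have "slice ?D ord0 = (if ord0 \<in> B then unit_ival \<inter> {x. r < x * c} else {})"
    by (auto simp: slice_def tauS_def c_def)
  ultimately have "slice ?D ord0 \<in> borel_I"
    using empty_in_borel_I by auto
  moreover have "slice ?D eta \<in> {{}, unit_ival}" if "eta \<in> B" "eta \<noteq> ord0" for eta
    using that tauS_above_ord0[OF assms(1) _ assms(2)] by (auto simp: slice_def)
  ultimately show ?thesis
    by (auto simp: Lambda_set_def)
qed

lemma sem_in_Lambda_set:
  assumes "\<And>X. X \<in> borel_I \<Longrightarrow> measure m0 X = measure m1 X"
  shows "sem (unit_ival \<times> B) (tauS m0 m1 qe alpha) p \<in> Lambda_set B"
proof -
  interpret Lambda: sigma_algebra "unit_ival \<times> B" "Lambda_set B"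
    by (rule sigma_algebra_Lambda_set)
  show ?thesis
  proof (induction p)
    case Top
    show ?case by simp
  next
    case (Conj p q)
    then show ?case by auto
  next
    case (Diam a r p)
    then show ?case
      using Diam_preserves_Lambda_set[OF _ assms] by simp
  qed
qed

text \<open>Only the agreement of \<open>m\<^sub>0\<close> and \<open>m\<^sub>1\<close> on Borel sets is used: the inclusion holds for
  every \<open>\<beta>\<close>, enumeration \<open>q\<^sub>n\<close> and choice of fundamental sequences.\<close>

theorem lemma5p4:
  fixes B :: "'b::wellorder set"
    and V :: "real set"
    and m0 m1 :: "real measure"
    and qe :: "nat \<Rightarrow> real"
    and alpha :: "nat \<Rightarrow> 'b \<Rightarrow> 'b"
  assumes "ordinal_le_omega1 B"
    and "V \<subseteq> unit_ival" and "V \<notin> sets lebesgue"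
    and "space m0 = unit_ival" and "sets m0 = sigma_sets unit_ival (insert V borel_I)"
    and "space m1 = unit_ival" and "sets m1 = sigma_sets unit_ival (insert V borel_I)"
    and "\<forall>A\<in>borel_I. emeasure m0 A = emeasure lborel A"
    and "\<forall>A\<in>borel_I. emeasure m1 A = emeasure lborel A"
    and "emeasure m0 V \<noteq> emeasure m1 V"
    and "bij_betw qe UNIV (\<rat> \<inter> unit_ival)"
    and "alpha_seq B alpha"
  shows "sigma_L (unit_ival \<times> B) (tauS m0 m1 qe alpha) \<subseteq> Lambda_set B"
proof -
  have "measure m0 X = measure m1 X" if "X \<in> borel_I" for X
    using assms(8,9) that by (simp add: measure_def)
  then have "{sem (unit_ival \<times> B) (tauS m0 m1 qe alpha) p | p. wf_form p} \<subseteq> Lambda_set B"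
    using sem_in_Lambda_set by blast
  then show ?thesis
    unfolding sigma_L_def by (rule sigma_algebra.sigma_sets_subset[OF sigma_algebra_Lambda_set])
qed

end
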